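(* Let $p$ be a prime, $a$ an integer with $p\nmid a$, and $\chi$ a Dirichlet character modulo $p^m$ ($m\ge1$). Let $n\ge m$ and $k\ge0$ be integers with $\chi(-1)\ne(-1)^k$. If $p\ge5$, or $p\in\{2,3\}$ and $n\ge2$, then $$(1-\chi(a)a^{k+1})L(-k,\chi)\equiv\chi(a)a^k\sum_{j=1}^{p^n-1}\chi(j)j^k\left\lfloor\frac{ja}{p^n}\right\rfloor\pmod{p^n}.$$
   Context: $L(-k,\chi)=-B_{k+1,\chi}/(k+1)$ is the value of the Dirichlet $L$-function $L(s,\chi)=\sum_{n\ge1}\chi(n)n^{-s}$ at $s=-k$, where $\sum_{k\ge0}B_{k,\chi}t^k/k!=\sum_{a=1}^f\chi(a)te^{at}/(e^{ft}-1)$ for $\chi$ modulo $f$. $\lfloor x\rfloor$ is the floor function. All quantities lie in the cyclotomic field generated by the values of $\chi$; $x\equiv y\pmod{p^n}$ means $(x-y)/p^n$ is integral at every prime above $p$. *)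

theory Defs
  imports Complex_Main "HOL-Computational_Algebra.Computational_Algebra"
begin

definition dirichlet_char :: "int \<Rightarrow> (int \<Rightarrow> complex) \<Rightarrow> bool" where
  "dirichlet_char N \<chi> \<longleftrightarrow> N \<ge> 1 \<and> \<chi> 1 = 1 \<and>
     (\<forall>x y. \<chi> (x * y) = \<chi> x * \<chi> y) \<and>
     (\<forall>x. \<chi> (x + N) = \<chi> x) \<and>
     (\<forall>x. \<chi> x \<noteq> 0 \<longleftrightarrow> coprime x N)"

definition gen_bernoulli :: "(int \<Rightarrow> complex) \<Rightarrow> nat \<Rightarrow> nat \<Rightarrow> complex" where
  "gen_bernoulli \<chi> f k = fact k * fps_nth
     ((\<Sum>a=1..f. fps_const (\<chi> (int a)) * fps_X * fps_exp (of_nat a))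
        / (fps_exp (of_nat f) - 1)) k"

definition L_neg :: "(int \<Rightarrow> complex) \<Rightarrow> nat \<Rightarrow> nat \<Rightarrow> complex" where
  "L_neg \<chi> f k = - gen_bernoulli \<chi> f (k + 1) / of_nat (k + 1)"

definition algebraic_integer :: "complex \<Rightarrow> bool" where
  "algebraic_integer x \<longleftrightarrow> (\<exists>q :: int poly. lead_coeff q = 1 \<and> poly (map_poly of_int q) x = 0)"

(* (x - y)/p^n is integral at every prime above p, i.e. lies in the semilocal ring
   Z_(p) O_K: some integer d prime to p makes d (x-y)/p^n an algebraic integer *)
definition cong_ppow :: "nat \<Rightarrow> nat \<Rightarrow> complex \<Rightarrow> complex \<Rightarrow> bool" where
  "cong_ppow p n x y \<longleftrightarrow>
     (\<exists>d::int. \<not> int p dvd d \<and> algebraic_integer (of_int d * (x - y) / of_nat (p ^ n)))"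

end

theory Submission
  imports Defs "Jordan_Normal_Form.Char_Poly" "HOL-Number_Theory.Number_Theory"
begin

text \<open>
  Let \<open>S\<^sub>R(K)\<close> and \<open>T\<^sub>R\<close> be the sums of \<open>\<chi>(j) j\<^sup>K\<close> and of \<open>\<chi>(j) j\<^sup>k \<lfloor>j a / p\<^sup>R\<rfloor>\<close> over
  \<open>0 \<le> j < p\<^sup>R\<close>, so that the sum in the theorem is \<open>T\<^sub>n\<close>.
  Writing \<open>j a = r\<^sub>j + p\<^sup>R q\<^sub>j\<close>, the map \<open>j \<mapsto> r\<^sub>j\<close> permutes the residues modulo \<open>p\<^sup>R\<close>, so the
  binomial theorem gives \<open>(\<chi>(a) a\<^sup>k\<^sup>+\<^sup>1 - 1) S\<^sub>R(k+1) \<equiv> (k+1) p\<^sup>R \<chi>(a) a\<^sup>k T\<^sub>R\<close> modulo \<open>p\<^sup>2\<^sup>R\<close>.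
  The generating function of the generalized Bernoulli numbers gives
  \<open>S\<^sub>R(k+1) = p\<^sup>R (B\<^sub>k\<^sub>+\<^sub>1\<^sub>,\<^sub>\<chi> + O(p\<^sup>R))\<close>, where the error term involves Bernoulli numbers whose
  denominators have bounded \<open>p\<close>-part; for large \<open>R\<close> this is the claimed congruence with \<open>T\<^sub>R\<close>
  in place of \<open>T\<^sub>n\<close>. Finally the parity condition \<open>\<chi>(-1) \<noteq> (-1)\<^sup>k\<close> forces \<open>S\<^sub>R(k) \<equiv> 0\<close> modulo
  \<open>p\<^sup>R\<close> (for \<open>p = 2\<close> only when \<open>R \<ge> 2\<close>), and with Hermite's identity this gives
  \<open>T\<^sub>R\<^sub>+\<^sub>1 \<equiv> T\<^sub>R\<close> modulo \<open>p\<^sup>R\<close>.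

  All congruences are taken in \<open>\<int>\<^sub>(\<^sub>p\<^sub>)[\<zeta>]\<close> for a root of unity \<open>\<zeta>\<close> carrying the values of \<open>\<chi>\<close>;
  its elements are algebraic integers because they are eigenvalues of integer circulant matrices.
\<close>

section \<open>Integer combinations of roots of unity\<close>

lemma power_mod_of_power_eq_1:
  fixes z :: "'a::monoid_mult"
  assumes "z ^ M = 1"
  shows "z ^ n = z ^ (n mod M)"
proof -
  have "z ^ n = z ^ (M * (n div M) + n mod M)" by simp
  also have "\<dots> = (z ^ M) ^ (n div M) * z ^ (n mod M)" by (simp only: power_add power_mult)
  finally have "z ^ n = (z ^ M) ^ (n div M) * z ^ (n mod M)" .
  with assms show ?thesis by simp
qed

lemma sum_roots_of_unity_times_power:
  fixes z :: complex and c :: "nat \<Rightarrow> int"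
  assumes z: "z ^ M = 1" and s: "s < M"
  shows "(\<Sum>t<M. of_int (c t) * z ^ t) * z ^ s = (\<Sum>u<M. of_int (c ((u + M - s) mod M)) * z ^ u)"
proof -
  have inv_left: "((t + s) mod M + M - s) mod M = t" if "t < M" for t
    using that s by (cases "t + s < M") (simp_all add: le_mod_geq)
  have inv_right: "((u + M - s) mod M + s) mod M = u" if "u < M" for u
    using that s by (simp add: mod_add_left_eq)
  have "(\<Sum>t<M. of_int (c t) * z ^ (t + s)) = (\<Sum>u<M. of_int (c ((u + M - s) mod M)) * z ^ u)"
  proof (rule sum.reindex_bij_witness[where i = "\<lambda>u. (u + M - s) mod M" and j = "\<lambda>t. (t + s) mod M"])
    fix t assume "t \<in> {..<M}"
    then show "of_int (c (((t + s) mod M + M - s) mod M)) * z ^ ((t + s) mod M) = of_int (c t) * z ^ (t + s)"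
      using inv_left power_mod_of_power_eq_1[OF z, of "t + s"] by simp
  qed (use s inv_left inv_right in \<open>simp_all\<close>)
  then show ?thesis
    by (simp add: sum_distrib_right power_add mult.assoc)
qed

lemma algebraic_integer_sum_roots_of_unity:
  fixes z :: complex and c :: "nat \<Rightarrow> int"
  assumes M: "M > 0" and z: "z ^ M = 1"
  shows "algebraic_integer (\<Sum>t<M. of_int (c t) * z ^ t)"
proof -
  define e where "e = (\<Sum>t<M. of_int (c t) * z ^ t)"
  define A :: "int mat" where "A = mat M M (\<lambda>(s, u). c ((u + M - s) mod M))"
  define v :: "complex vec" where "v = vec M (\<lambda>s. z ^ s)"
  have A: "A \<in> carrier_mat M M" unfolding A_def by simp
  have Ac: "of_int_hom.mat_hom A \<in> carrier_mat M M" using A by simp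
  have v0: "v \<noteq> 0\<^sub>v M"
  proof
    assume "v = 0\<^sub>v M"
    then have "v $ 0 = 0" using M by simp
    then show False unfolding v_def using M by simp
  qed
  have "of_int_hom.mat_hom A *\<^sub>v v = e \<cdot>\<^sub>v v"
  proof (rule eq_vecI)
    fix s assume "s < dim_vec (e \<cdot>\<^sub>v v)"
    then have s: "s < M" unfolding v_def by simp
    have "(of_int_hom.mat_hom A *\<^sub>v v) $ s = (\<Sum>u<M. of_int (c ((u + M - s) mod M)) * z ^ u)"
      using s A unfolding v_def A_def by (simp add: scalar_prod_def lessThan_atLeast0 row_def)
    also have "\<dots> = e * z ^ s"
      unfolding e_def by (rule sum_roots_of_unity_times_power[OF z s, symmetric])
    finally show "(of_int_hom.mat_hom A *\<^sub>v v) $ s = (e \<cdot>\<^sub>v v) $ s" using s unfolding v_def by simp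
  qed (simp add: A_def v_def)
  then have "eigenvalue (of_int_hom.mat_hom A) e"
    unfolding eigenvalue_def eigenvector_def using v0 Ac by (intro exI[of _ v]) (auto simp: v_def)
  then have "poly (char_poly (of_int_hom.mat_hom A)) e = 0"
    using eigenvalue_root_char_poly[OF Ac] by blast
  then have "poly (map_poly of_int (char_poly A)) e = 0"
    by (simp add: of_int_hom.char_poly_hom[OF A])
  moreover have "lead_coeff (char_poly A) = 1"
    using degree_monic_char_poly[OF A] by simp
  ultimately show ?thesis unfolding algebraic_integer_def e_def by blast
qed

section \<open>Dirichlet characters\<close>

lemma dirichlet_char_periodic:
  assumes "dirichlet_char N \<chi>"
  shows "\<chi> (x + j * N) = \<chi> x"
proof -
  have shift: "\<chi> (y + N) = \<chi> y" for y
    using assms unfolding dirichlet_char_def by blast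
  have nat_shift: "\<chi> (y + int i * N) = \<chi> y" for y i
  proof (induction i)
    case (Suc i)
    have "\<chi> (y + int (Suc i) * N) = \<chi> ((y + int i * N) + N)"
      by (simp add: algebra_simps)
    then show ?case using shift Suc by simp
  qed simp
  show ?thesis
  proof (cases "j \<ge> 0")
    case True
    then show ?thesis using nat_shift[of x "nat j"] by simp
  next
    case False
    then show ?thesis using nat_shift[of "x + j * N" "nat (- j)"] by simp
  qed
qed

lemma dirichlet_char_mod: "dirichlet_char N \<chi> \<Longrightarrow> \<chi> (x mod N) = \<chi> x"
  using dirichlet_char_periodic[of N \<chi> "x mod N" "x div N"] by simp

lemma dirichlet_char_power: "dirichlet_char N \<chi> \<Longrightarrow> \<chi> (x ^ n) = \<chi> x ^ n"
  by (induction n) (simp_all add: dirichlet_char_def)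

lemma dirichlet_char_power_totient:
  assumes \<chi>: "dirichlet_char N \<chi>" and cop: "coprime x N"
  shows "\<chi> x ^ totient (nat N) = 1"
proof -
  have N: "N \<ge> 1" using \<chi> unfolding dirichlet_char_def by blast
  define r where "r = nat (x mod N)"
  have r: "int r = x mod N" unfolding r_def using N by simp
  have "coprime (int r) (int (nat N))"
    using cop N by (simp add: r)
  then have "[r ^ totient (nat N) = 1] (mod nat N)"
    by (intro euler_theorem) (simp only: coprime_int_iff)
  then have "int (r ^ totient (nat N) mod nat N) = int (1 mod nat N)"
    unfolding cong_def by simp
  then have "(int r ^ totient (nat N)) mod N = 1 mod N"
    using N by (simp add: zmod_int)
  then have "\<chi> (int r ^ totient (nat N)) = \<chi> 1"
    by (metis dirichlet_char_mod[OF \<chi>])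
  moreover have "\<chi> (int r) = \<chi> x"
    unfolding r by (rule dirichlet_char_mod[OF \<chi>])
  moreover have "\<chi> 1 = 1"
    using \<chi> unfolding dirichlet_char_def by blast
  ultimately show ?thesis
    by (simp add: dirichlet_char_power[OF \<chi>])
qed

lemma dirichlet_char_minus_one:
  assumes "dirichlet_char N \<chi>"
  shows "\<chi> (-1) = 1 \<or> \<chi> (-1) = -1"
proof -
  have "\<chi> (-1) * \<chi> (-1) = 1"
    using assms unfolding dirichlet_char_def by (metis mult_minus1_right minus_minus)
  then have "(\<chi> (-1) - 1) * (\<chi> (-1) + 1) = 0" by (simp add: algebra_simps)
  then show ?thesis by (auto simp: eq_neg_iff_add_eq_0)
qed

lemma dirichlet_char_values_roots_of_unity:
  assumes "dirichlet_char N \<chi>"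
  obtains \<zeta> :: complex where "\<zeta> ^ totient (nat N) = 1" "\<And>x. \<exists>s. \<chi> x = 0 \<or> \<chi> x = \<zeta> ^ s"
proof
  define q where "q = totient (nat N)"
  have q: "q > 0" using assms unfolding q_def dirichlet_char_def by simp
  show "cis (2 * pi / q) ^ totient (nat N) = 1"
    using q unfolding q_def DeMoivre by simp
  show "\<exists>s. \<chi> x = 0 \<or> \<chi> x = cis (2 * pi / q) ^ s" for x
  proof (cases "\<chi> x = 0")
    case False
    then have "\<chi> x ^ q = 1"
      using assms dirichlet_char_power_totient unfolding q_def dirichlet_char_def by blast
    then obtain s where "\<chi> x = cis (2 * pi * real s / real q)"
      using bij_betw_imp_surj_on[OF bij_betw_roots_unity[OF q]] by blast
    then show ?thesis unfolding DeMoivre by (auto simp: field_simps)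
  qed simp
qed

section \<open>Generalized Bernoulli numbers and power sums\<close>

definition char_exp_sum :: "(int \<Rightarrow> complex) \<Rightarrow> nat \<Rightarrow> complex fps" where
  "char_exp_sum \<chi> F = (\<Sum>a=1..F. fps_const (\<chi> (int a)) * fps_exp (of_nat a))"

definition gen_bernoulli_fps :: "(int \<Rightarrow> complex) \<Rightarrow> nat \<Rightarrow> complex fps" where
  "gen_bernoulli_fps \<chi> f = fps_X * char_exp_sum \<chi> f / (fps_exp (of_nat f) - 1)"

lemma gen_bernoulli_eq_fps_nth: "gen_bernoulli \<chi> f k = fact k * gen_bernoulli_fps \<chi> f $ k"
  unfolding gen_bernoulli_def gen_bernoulli_fps_def char_exp_sum_def
  by (simp add: sum_distrib_left mult_ac)

lemma gen_bernoulli_fps_times: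
  assumes "f > 0"
  shows "gen_bernoulli_fps \<chi> f * (fps_exp (of_nat f) - 1) = fps_X * char_exp_sum \<chi> f"
proof (cases "char_exp_sum \<chi> f = 0")
  case False
  have "(fps_exp (of_nat f) - 1 :: complex fps) $ 1 \<noteq> 0" using assms by simp
  then have "subdegree (fps_exp (of_nat f) - 1 :: complex fps) \<le> 1" "fps_exp (of_nat f) - 1 \<noteq> (0 :: complex fps)"
    by (auto intro: subdegree_leI)
  moreover have "subdegree (fps_X * char_exp_sum \<chi> f) \<ge> 1"
    using False by (intro subdegree_geI) simp_all
  ultimately show ?thesis
    unfolding gen_bernoulli_fps_def by (simp add: fps_times_divide_eq)
qed (simp add: gen_bernoulli_fps_def)

lemma char_exp_sum_multiple:
  assumes "dirichlet_char (int f) \<chi>"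
  shows "char_exp_sum \<chi> (f * r) = char_exp_sum \<chi> f * (\<Sum>v<r. fps_exp (of_nat (f * v)))"
proof (induction r)
  case (Suc r)
  define h where "h a = fps_const (\<chi> (int a)) * fps_exp (of_nat a :: complex)" for a
  have "char_exp_sum \<chi> (f * Suc r) = sum h {1..f * r} + sum h {f * r + 1..f * r + f}"
    unfolding char_exp_sum_def h_def by (subst sum.ub_add_nat[symmetric]) (simp_all add: add.commute)
  also have "sum h {f * r + 1..f * r + f} = (\<Sum>i=1..f. h (i + f * r))"
    using sum.shift_bounds_cl_nat_ivl[of h 1 "f * r" f] by (simp add: add.commute)
  also have "\<dots> = fps_exp (of_nat (f * r)) * char_exp_sum \<chi> f"
    unfolding char_exp_sum_def sum_distrib_left h_def
    using dirichlet_char_periodic[OF assms, of "int _" "int r"]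
    by (intro sum.cong) (simp_all add: fps_exp_add_mult mult_ac)
  finally show ?case
    using Suc by (simp add: h_def char_exp_sum_def algebra_simps)
qed (simp add: char_exp_sum_def)

lemma gen_bernoulli_fps_times_multiple:
  assumes "dirichlet_char (int f) \<chi>"
  shows "gen_bernoulli_fps \<chi> f * (fps_exp (of_nat (f * r)) - 1) = fps_X * char_exp_sum \<chi> (f * r)"
proof -
  have f: "f > 0" using assms unfolding dirichlet_char_def by simp
  have "fps_exp (of_nat (f * r)) - 1
      = (fps_exp (of_nat f) - 1) * (\<Sum>v<r. fps_exp (of_nat (f * v)) :: complex fps)"
    using power_diff_1_eq[of "fps_exp (of_nat f) :: complex fps" r]
    by (simp add: fps_exp_power_mult mult.commute)
  then show ?thesis
    using gen_bernoulli_fps_times[OF f, of \<chi>] char_exp_sum_multiple[OF assms, of r]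
    by (simp add: mult.assoc)
qed

lemma gen_bernoulli_power_sum:
  assumes "dirichlet_char (int f) \<chi>"
  shows "(\<Sum>a=1..f * r. \<chi> (int a) * of_nat a ^ K) / fact K
    = (\<Sum>i\<le>K. gen_bernoulli \<chi> f i / fact i * of_nat (f * r) ^ (Suc K - i) / fact (Suc K - i))"
proof -
  define F where "F = f * r"
  have "(fps_X * char_exp_sum \<chi> F) $ Suc K = (\<Sum>a=1..F. \<chi> (int a) * of_nat a ^ K) / fact K"
    by (simp add: char_exp_sum_def fps_sum_nth sum_divide_distrib)
  moreover have "(gen_bernoulli_fps \<chi> f * (fps_exp (of_nat F) - 1)) $ Suc K
      = (\<Sum>i\<le>K. gen_bernoulli \<chi> f i / fact i * of_nat F ^ (Suc K - i) / fact (Suc K - i))"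
    by (simp add: fps_mult_nth atLeast0AtMost[symmetric] sum.atLeast0_atMost_Suc
                  gen_bernoulli_eq_fps_nth Suc_diff_le)
  ultimately show ?thesis
    using gen_bernoulli_fps_times_multiple[OF assms, of r] unfolding F_def by simp
qed

section \<open>Elementary identities for finite sums\<close>

lemma sum_mult_mod_reindex:
  fixes a :: int and h :: "nat \<Rightarrow> 'b::comm_monoid_add"
  assumes F: "F > 0" and cop: "coprime a (int F)"
  shows "(\<Sum>j<F. h (nat ((int j * a) mod int F))) = (\<Sum>j<F. h j)"
proof -
  define g where "g j = nat ((int j * a) mod int F)" for j
  have "inj_on g {..<F}"
  proof (rule inj_onI)
    fix j1 j2 assume j: "j1 \<in> {..<F}" "j2 \<in> {..<F}" and "g j1 = g j2"
    then have "[int j1 * a = int j2 * a] (mod int F)"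
      using F unfolding g_def cong_def by (simp add: nat_eq_iff)
    then have "[int j1 = int j2] (mod int F)"
      using cop by (metis cong_mult_rcancel)
    then show "j1 = j2"
      using j by (simp add: cong_def)
  qed
  moreover have "g ` {..<F} \<subseteq> {..<F}"
    unfolding g_def using F by (auto simp: nat_less_iff)
  ultimately have "g ` {..<F} = {..<F}"
    by (simp add: card_image card_subset_eq)
  then show ?thesis
    using sum.reindex[OF \<open>inj_on g {..<F}\<close>, of h] unfolding g_def by simp
qed

lemma sum_div_shift:
  fixes y :: int
  assumes P: "P > 0"
  shows "(\<Sum>t<P. (y + int t) div int P) = y"
proof (induction y rule: int_induct[where k = 0])
  case base
  then show ?case by (simp add: div_pos_pos_trivial)
next
  case (step1 y)
  have "(\<Sum>t<P. (y + 1 + int t) div int P) = (\<Sum>t<Suc P. (y + int t) div int P) - y div int P"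
    by (subst sum.lessThan_Suc_shift) (simp add: add_ac)
  also have "\<dots> = (\<Sum>t<P. (y + int t) div int P) + 1"
    using P by simp
  finally show ?case using step1 by simp
next
  case (step2 y)
  have "(\<Sum>t<P. (y + int t) div int P) = (\<Sum>t<Suc P. (y - 1 + int t) div int P) - (y - 1) div int P"
    by (subst sum.lessThan_Suc_shift) (simp add: add_ac)
  also have "\<dots> = (\<Sum>t<P. (y - 1 + int t) div int P) + 1"
    using P by simp
  finally show ?case using step2 by simp
qed

lemma sum_div_lift:
  fixes a u :: int
  assumes M: "M > 0" and P: "P > 0" and cop: "coprime a (int P)"
  shows "(\<Sum>v<P. ((u + int M * int v) * a) div (int P * int M))
    = u * a div int M + (\<Sum>v<P. (int v * a) div int P)"
proof -
  define y where "y = u * a div int M"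
  have split: "((u + int M * int v) * a) div (int P * int M)
      = (y + (int v * a) mod int P) div int P + (int v * a) div int P" for v
  proof -
    have "((u + int M * int v) * a) div (int P * int M) = (u * a + int M * (int v * a)) div int M div int P"
      by (simp add: algebra_simps zdiv_zmult2_eq[symmetric] mult.commute[of "int P"])
    also have "\<dots> = (y + int v * a) div int P"
      using M by (simp add: y_def add_ac)
    also have "\<dots> = (y + (int v * a) mod int P + int P * ((int v * a) div int P)) div int P"
      by (simp only: add.assoc mod_mult_div_eq)
    also have "\<dots> = (y + (int v * a) mod int P) div int P + (int v * a) div int P"
      using P by (subst div_mult_self2) simp_all
    finally show ?thesis .
  qed
  have "(\<Sum>v<P. (y + (int v * a) mod int P) div int P) = (\<Sum>t<P. (y + int t) div int P)"
    using sum_mult_mod_reindex[OF P cop, of "\<lambda>t. (y + int t) div int P"] P by simp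
  then show ?thesis
    unfolding split sum.distrib using sum_div_shift[OF P] y_def by simp
qed

lemma power_Suc_add_second_order:
  fixes x y :: int
  shows "\<exists>w. (x + y) ^ Suc k = x ^ Suc k + int (Suc k) * y * x ^ k + y\<^sup>2 * w"
proof (induction k)
  case (Suc k)
  then obtain w where "(x + y) ^ Suc k = x ^ Suc k + int (Suc k) * y * x ^ k + y\<^sup>2 * w"
    by blast
  then have "(x + y) ^ Suc (Suc k)
      = x ^ Suc (Suc k) + int (Suc (Suc k)) * y * x ^ Suc k + y\<^sup>2 * (x * w + int (Suc k) * x ^ k + y * w)"
    by (simp add: algebra_simps power2_eq_square)
  then show ?case by blast
qed (intro exI[of _ 0], simp)

lemma neg_mod_power_Suc_expansion:
  fixes F :: nat
  obtains w :: "nat \<Rightarrow> int" where "\<And>u. 0 < u \<Longrightarrow> u < F \<Longrightarrow>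
    (of_int ((- int u) mod int F) :: complex) ^ Suc k = (-1) ^ Suc k * of_nat u ^ Suc k
      + of_nat (Suc k) * of_nat F * (-1) ^ k * of_nat u ^ k + of_nat F ^ 2 * of_int (w u)"
proof -
  have "\<forall>u. \<exists>w. (- int u + int F) ^ Suc k
      = (- int u) ^ Suc k + int (Suc k) * int F * (- int u) ^ k + (int F)\<^sup>2 * w"
    using power_Suc_add_second_order by blast
  then obtain w where w: "\<And>u. (- int u + int F) ^ Suc k
      = (- int u) ^ Suc k + int (Suc k) * int F * (- int u) ^ k + (int F)\<^sup>2 * w u"
    by metis
  have "(of_int ((- int u) mod int F) :: complex) ^ Suc k = (-1) ^ Suc k * of_nat u ^ Suc k
      + of_nat (Suc k) * of_nat F * (-1) ^ k * of_nat u ^ k + of_nat F ^ 2 * of_int (w u)"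
    if "0 < u" "u < F" for u
  proof -
    have "(- int u) mod int F = - int u + int F" using that by (simp add: zmod_zminus1_eq_if)
    then have "(of_int ((- int u) mod int F) :: complex) ^ Suc k
        = of_int (- int u) ^ Suc k + of_nat (Suc k) * of_nat F * of_int (- int u) ^ k + of_nat F ^ 2 * of_int (w u)"
      using arg_cong[OF w[of u], of "of_int :: int \<Rightarrow> complex"] by simp
    then show ?thesis
      by (simp only: of_int_minus of_int_of_nat_eq power_minus[of "of_nat u :: complex"] mult.assoc)
  qed
  then show ?thesis using that by blast
qed

lemma diff_dvd_power_diff: "x - y dvd x ^ n - y ^ (n :: nat)" for x y :: int
  using power_diff_sumr2[of x n y] by simp

lemma sum_lessThan_double_odd: "(\<Sum>u<2 * Q. if odd u then 1 else 0 :: complex) = of_nat Q"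
  by (induction Q) (simp_all add: algebra_simps)

lemma sum_lessThan_mult_blocks:
  fixes h :: "nat \<Rightarrow> 'a::comm_monoid_add"
  shows "(\<Sum>j<M * P. h j) = (\<Sum>v<P. \<Sum>u<M. h (u + M * v))"
proof (induction P)
  case (Suc P)
  have "(\<Sum>j<M * Suc P. h j) = sum h {0..<M * P} + sum h {0 + M * P..<M + M * P}"
    using sum.atLeastLessThan_concat[of 0 "M * P" "M + M * P" h] by (simp add: atLeast0LessThan)
  also have "sum h {0 + M * P..<M + M * P} = (\<Sum>u<M. h (u + M * P))"
    by (subst sum.shift_bounds_nat_ivl) (simp add: atLeast0LessThan)
  finally show ?case using Suc by (simp add: atLeast0LessThan)
qed simp

section \<open>Integrality at \<open>p\<close>\<close>

text \<open>\<open>Z_zeta\<close> is \<open>\<int>[\<zeta>]\<close>, \<open>p_integral\<close> is the semilocal ring \<open>\<int>\<^sub>(\<^sub>p\<^sub>)[\<zeta>]\<close>, \<open>p_bounded\<close> allows in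
  addition a bounded power of \<open>p\<close> in the denominator, and \<open>congp n x y\<close> is \<open>x \<equiv> y\<close> modulo \<open>p\<^sup>n\<close>
  in \<open>\<int>\<^sub>(\<^sub>p\<^sub>)[\<zeta>]\<close>.\<close>

locale p_cyclotomic =
  fixes p :: nat and \<zeta> :: complex and q :: nat
  assumes prime: "prime p" and order_pos: "q > 0" and root: "\<zeta> ^ q = 1"
begin

lemma p_pos: "p > 0"
  using prime by (simp add: prime_gt_0_nat)

definition Z_zeta :: "complex set" where
  "Z_zeta = {x. \<exists>c::nat \<Rightarrow> int. x = (\<Sum>t<q. of_int (c t) * \<zeta> ^ t)}"

lemma Z_zeta_algebraic_integer: "x \<in> Z_zeta \<Longrightarrow> algebraic_integer x"
  unfolding Z_zeta_def using algebraic_integer_sum_roots_of_unity[OF order_pos root] by blast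

lemma Z_zeta_of_int: "of_int n \<in> Z_zeta"
proof -
  have "(\<Sum>t<q. of_int (if t = 0 then n else 0) * \<zeta> ^ t) = (of_int n :: complex)"
    using order_pos by (simp add: if_distrib if_distribR sum.delta cong: if_cong)
  then show ?thesis unfolding Z_zeta_def by (intro CollectI exI[of _ "\<lambda>t. if t = 0 then n else 0"]) simp
qed

lemma Z_zeta_add: "x \<in> Z_zeta \<Longrightarrow> y \<in> Z_zeta \<Longrightarrow> x + y \<in> Z_zeta"
  unfolding Z_zeta_def
  by (auto simp: sum.distrib[symmetric] distrib_right intro: exI[of _ "\<lambda>t. _ t + _ t"])

lemma Z_zeta_sum: "(\<And>i. i \<in> A \<Longrightarrow> f i \<in> Z_zeta) \<Longrightarrow> sum f A \<in> Z_zeta"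
  by (induction A rule: infinite_finite_induct) (auto intro: Z_zeta_add Z_zeta_of_int[of 0, simplified])

lemma Z_zeta_of_int_mult: "x \<in> Z_zeta \<Longrightarrow> of_int n * x \<in> Z_zeta"
  unfolding Z_zeta_def
  by (auto simp: sum_distrib_left mult.assoc intro: exI[of _ "\<lambda>t. n * _ t"])

lemma Z_zeta_mult_root_power:
  assumes "x \<in> Z_zeta"
  shows "x * \<zeta> ^ s \<in> Z_zeta"
proof -
  obtain c where c: "x = (\<Sum>t<q. of_int (c t) * \<zeta> ^ t)"
    using assms unfolding Z_zeta_def by blast
  have "x * \<zeta> ^ s = x * \<zeta> ^ (s mod q)"
    using power_mod_of_power_eq_1[OF root] by metis
  also have "\<dots> = (\<Sum>u<q. of_int (c ((u + q - s mod q) mod q)) * \<zeta> ^ u)"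
    unfolding c using sum_roots_of_unity_times_power[OF root] order_pos by simp
  finally show ?thesis
    unfolding Z_zeta_def by (intro CollectI exI[of _ "\<lambda>u. c ((u + q - s mod q) mod q)"])
qed

lemma Z_zeta_mult:
  assumes "x \<in> Z_zeta" "y \<in> Z_zeta"
  shows "x * y \<in> Z_zeta"
proof -
  obtain c where c: "x = (\<Sum>t<q. of_int (c t) * \<zeta> ^ t)"
    using assms(1) unfolding Z_zeta_def by blast
  have "x * y = (\<Sum>t<q. of_int (c t) * (y * \<zeta> ^ t))"
    unfolding c by (simp add: sum_distrib_left sum_distrib_right mult_ac)
  also have "\<dots> \<in> Z_zeta"
    by (intro Z_zeta_sum Z_zeta_of_int_mult Z_zeta_mult_root_power assms(2))
  finally show ?thesis .
qed

lemma Z_zeta_root_power: "\<zeta> ^ s \<in> Z_zeta"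
  using Z_zeta_mult_root_power[OF Z_zeta_of_int[of 1]] by simp

definition p_integral :: "complex set" where
  "p_integral = {x. \<exists>d::int. \<not> int p dvd d \<and> of_int d * x \<in> Z_zeta}"

definition p_bounded :: "complex set" where
  "p_bounded = {x. \<exists>e. of_nat p ^ e * x \<in> p_integral}"

lemma not_p_dvd_mult: "\<not> int p dvd d1 \<Longrightarrow> \<not> int p dvd d2 \<Longrightarrow> \<not> int p dvd (d1 * d2)"
  using prime by (simp add: prime_dvd_mult_iff)

lemma coprime_p_power_if_not_dvd:
  assumes "\<not> int p dvd a"
  shows "coprime a (int (p ^ R))"
proof -
  have "coprime (int p) a"
    by (rule prime_imp_coprime) (use prime assms in simp_all)
  then show ?thesis by (simp add: coprime_commute)
qed

lemma p_integral_if_Z_zeta: "x \<in> Z_zeta \<Longrightarrow> x \<in> p_integral"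
  unfolding p_integral_def using prime_gt_1_nat[OF prime] by (intro CollectI exI[of _ 1]) auto

lemma p_integral_of_int: "of_int n \<in> p_integral"
  by (rule p_integral_if_Z_zeta[OF Z_zeta_of_int])

lemma p_integral_of_nat: "of_nat n \<in> p_integral"
  using p_integral_of_int[of "int n"] by simp

lemma p_integral_0: "0 \<in> p_integral" and p_integral_1: "1 \<in> p_integral"
  using p_integral_of_int[of 0] p_integral_of_int[of 1] by simp_all

lemma p_integral_add:
  assumes "x \<in> p_integral" "y \<in> p_integral"
  shows "x + y \<in> p_integral"
proof -
  obtain d1 d2 where d: "\<not> int p dvd d1" "of_int d1 * x \<in> Z_zeta" "\<not> int p dvd d2" "of_int d2 * y \<in> Z_zeta"
    using assms unfolding p_integral_def by blast
  have "of_int (d1 * d2) * (x + y) = of_int d2 * (of_int d1 * x) + of_int d1 * (of_int d2 * y)"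
    by (simp add: algebra_simps)
  also have "\<dots> \<in> Z_zeta" by (rule Z_zeta_add; rule Z_zeta_of_int_mult; fact)
  finally show ?thesis unfolding p_integral_def using not_p_dvd_mult d by blast
qed

lemma p_integral_mult:
  assumes "x \<in> p_integral" "y \<in> p_integral"
  shows "x * y \<in> p_integral"
proof -
  obtain d1 d2 where d: "\<not> int p dvd d1" "of_int d1 * x \<in> Z_zeta" "\<not> int p dvd d2" "of_int d2 * y \<in> Z_zeta"
    using assms unfolding p_integral_def by blast
  have "of_int (d1 * d2) * (x * y) = (of_int d1 * x) * (of_int d2 * y)"
    by (simp add: algebra_simps)
  also have "\<dots> \<in> Z_zeta" by (rule Z_zeta_mult[OF d(2) d(4)])
  finally show ?thesis unfolding p_integral_def using not_p_dvd_mult d by blast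
qed

lemma p_integral_uminus: "x \<in> p_integral \<Longrightarrow> - x \<in> p_integral"
  using p_integral_mult[OF p_integral_of_int[of "-1"]] by simp

lemma p_integral_diff: "x \<in> p_integral \<Longrightarrow> y \<in> p_integral \<Longrightarrow> x - y \<in> p_integral"
  using p_integral_add[of x "- y"] p_integral_uminus[of y] by simp

lemma p_integral_sum: "(\<And>i. i \<in> A \<Longrightarrow> f i \<in> p_integral) \<Longrightarrow> sum f A \<in> p_integral"
  by (induction A rule: infinite_finite_induct)
     (auto intro: p_integral_add p_integral_0)

lemma p_integral_power: "x \<in> p_integral \<Longrightarrow> x ^ n \<in> p_integral"
  by (induction n) (auto intro: p_integral_mult p_integral_1)

lemma p_integral_divide_int:
  assumes "x \<in> p_integral" "\<not> int p dvd d"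
  shows "x / of_int d \<in> p_integral"
proof -
  obtain d1 where d1: "\<not> int p dvd d1" "of_int d1 * x \<in> Z_zeta"
    using assms(1) unfolding p_integral_def by blast
  have "d \<noteq> 0" using assms(2) by auto
  then have "of_int (d1 * d) * (x / of_int d) = of_int d1 * x" by simp
  then show ?thesis unfolding p_integral_def using not_p_dvd_mult[OF d1(1) assms(2)] d1(2) by auto
qed

lemma p_integral_divide_nat: "x \<in> p_integral \<Longrightarrow> \<not> p dvd d \<Longrightarrow> x / of_nat d \<in> p_integral"
  using p_integral_divide_int[of x "int d"] by simp

lemmas p_integral_intros =
  p_integral_0 p_integral_1 p_integral_of_int p_integral_of_nat p_integral_add p_integral_mult p_integral_uminus
  p_integral_diff p_integral_sum p_integral_power

lemma p_bounded_if_p_integral: "x \<in> p_integral \<Longrightarrow> x \<in> p_bounded"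
  unfolding p_bounded_def by (intro CollectI exI[of _ 0]) simp

lemma p_integral_mult_p_power:
  assumes "of_nat p ^ e * x \<in> p_integral" "e \<le> e'"
  shows "of_nat p ^ e' * x \<in> p_integral"
proof -
  have "of_nat p ^ e' * x = of_nat p ^ (e' - e) * (of_nat p ^ e * x)"
    using assms(2) by (simp add: mult.assoc power_add[symmetric])
  also have "\<dots> \<in> p_integral"
    by (intro p_integral_mult p_integral_power p_integral_of_nat assms(1))
  finally show ?thesis .
qed

lemma p_bounded_add:
  assumes "x \<in> p_bounded" "y \<in> p_bounded"
  shows "x + y \<in> p_bounded"
proof -
  obtain e1 e2 where e: "of_nat p ^ e1 * x \<in> p_integral" "of_nat p ^ e2 * y \<in> p_integral"
    using assms unfolding p_bounded_def by blast
  have "of_nat p ^ (e1 + e2) * x + of_nat p ^ (e1 + e2) * y \<in> p_integral"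
    by (intro p_integral_add p_integral_mult_p_power[OF e(1)] p_integral_mult_p_power[OF e(2)]) auto
  then show ?thesis unfolding p_bounded_def by (auto simp: distrib_left)
qed

lemma p_bounded_mult:
  assumes "x \<in> p_bounded" "y \<in> p_bounded"
  shows "x * y \<in> p_bounded"
proof -
  obtain e1 e2 where "of_nat p ^ e1 * x \<in> p_integral" "of_nat p ^ e2 * y \<in> p_integral"
    using assms unfolding p_bounded_def by blast
  then have "(of_nat p ^ e1 * x) * (of_nat p ^ e2 * y) \<in> p_integral"
    by (rule p_integral_mult)
  also have "(of_nat p ^ e1 * x) * (of_nat p ^ e2 * y) = of_nat p ^ (e1 + e2) * (x * y)"
    by (simp add: power_add mult_ac)
  finally show ?thesis unfolding p_bounded_def by blast
qed

lemma p_bounded_of_int: "of_int n \<in> p_bounded"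
  by (intro p_bounded_if_p_integral p_integral_of_int)

lemma p_bounded_diff: "x \<in> p_bounded \<Longrightarrow> y \<in> p_bounded \<Longrightarrow> x - y \<in> p_bounded"
  using p_bounded_add[of x "of_int (-1) * y"] p_bounded_mult[OF p_bounded_of_int, of y "-1"]
  by simp

lemma p_bounded_sum: "(\<And>i. i \<in> A \<Longrightarrow> f i \<in> p_bounded) \<Longrightarrow> sum f A \<in> p_bounded"
  by (induction A rule: infinite_finite_induct)
     (auto intro: p_bounded_add p_bounded_of_int[of 0, simplified])

lemma p_bounded_divide_nat:
  assumes "x \<in> p_bounded" "d > 0"
  shows "x / of_nat d \<in> p_bounded"
proof -
  obtain d' where d': "d = p ^ multiplicity p d * d'" "\<not> p dvd d'"
    using multiplicity_decompose'[of d p] assms(2) prime by (metis not_prime_unit not_gr0)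
  obtain e where "of_nat p ^ e * x \<in> p_integral"
    using assms(1) unfolding p_bounded_def by blast
  then have "of_nat p ^ e * x / of_nat d' \<in> p_integral"
    using d'(2) by (rule p_integral_divide_nat)
  also have "of_nat p ^ e * x / of_nat d' = of_nat p ^ (e + multiplicity p d) * (x / of_nat d)"
    using p_pos by (subst d'(1)) (simp add: power_add field_simps)
  finally show ?thesis unfolding p_bounded_def by blast
qed

lemma eventually_p_power_mult_p_integral:
  assumes "x \<in> p_bounded"
  shows "\<forall>\<^sub>F t in sequentially. of_nat p ^ t * x \<in> p_integral"
proof -
  obtain e where "of_nat p ^ e * x \<in> p_integral"
    using assms unfolding p_bounded_def by blast
  then show ?thesis
    unfolding eventually_sequentially using p_integral_mult_p_power by blast
qed

definition congp :: "nat \<Rightarrow> complex \<Rightarrow> complex \<Rightarrow> bool" where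
  "congp n x y \<longleftrightarrow> (x - y) / of_nat p ^ n \<in> p_integral"

lemma congpI: "w \<in> p_integral \<Longrightarrow> x - y = of_nat p ^ n * w \<Longrightarrow> congp n x y"
  unfolding congp_def using p_pos by simp

lemma congp_refl: "congp n x x"
  unfolding congp_def by (simp add: p_integral_0)

lemma congp_trans: "congp n x y \<Longrightarrow> congp n y w \<Longrightarrow> congp n x w"
  unfolding congp_def
  using p_integral_add[of "(x - y) / of_nat p ^ n" "(y - w) / of_nat p ^ n"]
  by (simp add: diff_divide_distrib)

lemma congp_add: "congp n x y \<Longrightarrow> congp n x' y' \<Longrightarrow> congp n (x + x') (y + y')"
proof -
  have "((x + x') - (y + y')) / of_nat p ^ n = (x - y) / of_nat p ^ n + (x' - y') / of_nat p ^ n"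
    by (simp add: diff_divide_distrib add_divide_distrib)
  then show "congp n x y \<Longrightarrow> congp n x' y' \<Longrightarrow> congp n (x + x') (y + y')"
    unfolding congp_def by (simp add: p_integral_add)
qed

lemma congp_mult_left: "w \<in> p_integral \<Longrightarrow> congp n x y \<Longrightarrow> congp n (w * x) (w * y)"
  unfolding congp_def
  using p_integral_mult[of w "(x - y) / of_nat p ^ n"] by (simp add: right_diff_distrib)

lemma congp_sum: "(\<And>i. i \<in> A \<Longrightarrow> congp n (f i) (g i)) \<Longrightarrow> congp n (sum f A) (sum g A)"
  by (induction A rule: infinite_finite_induct) (auto intro: congp_add congp_refl)

lemma congp_mono:
  assumes "congp n x y" "n' \<le> n"
  shows "congp n' x y"
proof -
  have "(x - y) / of_nat p ^ n' = of_nat p ^ (n - n') * ((x - y) / of_nat p ^ n)"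
    using assms(2) p_pos by (simp add: power_diff field_simps)
  with assms(1) show ?thesis
    unfolding congp_def by (metis p_integral_mult p_integral_power p_integral_of_nat)
qed

lemma cong_ppow_if_congp:
  assumes "congp n x y"
  shows "cong_ppow p n x y"
proof -
  obtain d where "\<not> int p dvd d" "of_int d * ((x - y) / of_nat p ^ n) \<in> Z_zeta"
    using assms unfolding congp_def p_integral_def by blast
  then show ?thesis
    unfolding cong_ppow_def by (auto dest: Z_zeta_algebraic_integer)
qed

lemma p_integral_half:
  assumes "x \<in> p_integral" "p \<noteq> 2"
  shows "x / 2 \<in> p_integral"
proof -
  have "\<not> int p dvd 2"
    using assms(2) prime_gt_1_nat[OF prime] by (auto dest: zdvd_imp_le)
  then show ?thesis using p_integral_divide_int[OF assms(1), of 2] by simp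
qed

lemma p_power_half_p_integral:
  assumes "R \<ge> 1"
  shows "of_nat (p ^ R) / 2 \<in> p_integral"
proof (cases "p = 2")
  case True
  then have "p ^ R = 2 * 2 ^ (R - 1)"
    using assms by (simp add: power_Suc[symmetric])
  then show ?thesis using p_integral_of_nat[of "2 ^ (R - 1)"] by simp
qed (intro p_integral_half p_integral_of_nat)

lemma p_bounded_divide_fact: "x \<in> p_bounded \<Longrightarrow> x / fact n \<in> p_bounded"
  using p_bounded_divide_nat[of x "fact n"] by (simp add: of_nat_fact)

lemma congp_of_int_power:
  assumes "int p ^ R dvd x - y"
  shows "congp R (of_int x ^ k) (of_int y ^ k)"
proof -
  obtain v where v: "x ^ k - y ^ k = int p ^ R * v"
    using dvd_trans[OF assms diff_dvd_power_diff] by blast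
  have "of_int x ^ k - of_int y ^ k = (of_nat p ^ R * of_int v :: complex)"
    using arg_cong[OF v, of "of_int :: int \<Rightarrow> complex"] by simp
  then show ?thesis by (rule congpI[OF p_integral_of_int])
qed

end

section \<open>Power sums of a character modulo a power of \<open>p\<close>\<close>

locale p_power_character = p_cyclotomic +
  fixes m :: nat and \<chi> :: "int \<Rightarrow> complex"
  assumes m_pos: "m \<ge> 1" and dirichlet: "dirichlet_char (int p ^ m) \<chi>"
    and values_Z_zeta: "\<chi> x \<in> Z_zeta"
begin

lemma chi_p_integral: "\<chi> x \<in> p_integral"
  by (rule p_integral_if_Z_zeta[OF values_Z_zeta])

lemma chi_mult: "\<chi> (x * y) = \<chi> x * \<chi> y"
  using dirichlet unfolding dirichlet_char_def by blast

lemma chi_periodic_p_power: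
  assumes "R \<ge> m"
  shows "\<chi> (x + j * int p ^ R) = \<chi> x"
proof -
  have "j * int p ^ R = (j * int p ^ (R - m)) * int p ^ m"
    using assms by (simp add: mult.assoc power_add[symmetric])
  then show ?thesis by (metis dirichlet_char_periodic[OF dirichlet])
qed

lemma chi_mod_p_power: "R \<ge> m \<Longrightarrow> \<chi> (x mod int p ^ R) = \<chi> x"
  using chi_periodic_p_power[of R "x mod int p ^ R" "x div int p ^ R"] by (metis mod_div_mult_eq)

lemma chi_eq_0_if_dvd:
  assumes "int p dvd x"
  shows "\<chi> x = 0"
proof -
  have "int p dvd int p ^ m" using m_pos by (simp add: dvd_power)
  then have "\<not> coprime x (int p ^ m)"
    using assms prime by (metis coprime_common_divisor not_prime_unit prime_nat_int_transfer)
  then show ?thesis using dirichlet unfolding dirichlet_char_def by blast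
qed

lemma chi_minus_one_opposite_parity:
  assumes "\<chi> (-1) \<noteq> (-1) ^ k"
  shows "\<chi> (-1) * (-1) ^ k = -1"
  using assms dirichlet_char_minus_one[OF dirichlet] by (cases "even k") auto

definition char_power_sum :: "nat \<Rightarrow> nat \<Rightarrow> complex" where
  "char_power_sum R K = (\<Sum>j<p ^ R. \<chi> (int j) * of_nat j ^ K)"

definition char_floor_sum :: "nat \<Rightarrow> int \<Rightarrow> nat \<Rightarrow> complex" where
  "char_floor_sum R a k = (\<Sum>j<p ^ R. \<chi> (int j) * of_nat j ^ k * of_int ((int j * a) div int (p ^ R)))"

lemma char_power_sum_p_integral: "char_power_sum R K \<in> p_integral"
  unfolding char_power_sum_def by (intro p_integral_intros chi_p_integral)

lemma gen_bernoulli_p_bounded: "gen_bernoulli \<chi> (p ^ m) K \<in> p_bounded"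
proof (induction K rule: less_induct)
  case (less K)
  define B where "B i = gen_bernoulli \<chi> (p ^ m) i" for i
  define N where "N = p ^ m"
  define S where "S = (\<Sum>a=1..N. \<chi> (int a) * of_nat a ^ K)"
  define T where "T = (\<Sum>i<K. B i / fact i * of_nat N ^ (Suc K - i) / fact (Suc K - i))"
  have N: "N > 0" unfolding N_def using p_pos by simp
  have "S / fact K = T + B K / fact K * of_nat N"
    using gen_bernoulli_power_sum[OF dirichlet[folded of_nat_power], where r = 1 and K = K]
    by (simp add: S_def T_def B_def N_def lessThan_Suc_atMost[symmetric])
  then have "B K = (S - fact K * T) / of_nat N"
    using N by (simp add: field_simps)
  moreover have "S \<in> p_bounded"
    unfolding S_def by (intro p_bounded_if_p_integral p_integral_intros chi_p_integral)
  moreover have "T \<in> p_bounded"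
    unfolding T_def
  proof (intro p_bounded_sum p_bounded_divide_fact p_bounded_mult)
    show "B i \<in> p_bounded" if "i \<in> {..<K}" for i
      using less that unfolding B_def by simp
  qed (intro p_bounded_if_p_integral p_integral_power p_integral_of_nat)
  moreover have "fact K \<in> p_bounded"
    using p_bounded_if_p_integral[OF p_integral_of_nat[of "fact K"]] by simp
  ultimately show ?case
    unfolding B_def using N by (auto intro: p_bounded_divide_nat p_bounded_diff p_bounded_mult)
qed

lemma char_power_sum_eq_sum_Icc:
  assumes "R \<ge> 1"
  shows "(\<Sum>a=1..p ^ R. \<chi> (int a) * of_nat a ^ K) = char_power_sum R K"
proof -
  define f where "f a = \<chi> (int a) * of_nat a ^ K" for a
  have "f 0 = 0" "f (p ^ R) = 0"
    unfolding f_def using assms by (simp_all add: chi_eq_0_if_dvd)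
  moreover have "(\<Sum>a\<le>p ^ R. f a) = f 0 + (\<Sum>a=1..p ^ R. f a)"
    by (simp add: atLeast0AtMost[symmetric] sum.atLeast_Suc_atMost)
  ultimately show ?thesis
    by (simp add: char_power_sum_def f_def[symmetric] lessThan_Suc_atMost[symmetric])
qed

definition power_sum_coeff :: "nat \<Rightarrow> nat \<Rightarrow> complex" where
  "power_sum_coeff K i = fact K * gen_bernoulli \<chi> (p ^ m) i / (fact i * fact (Suc K - i))"

lemma power_sum_coeff_p_bounded: "power_sum_coeff K i \<in> p_bounded"
  unfolding power_sum_coeff_def
  using p_bounded_divide_fact[OF p_bounded_divide_fact, of "fact K * gen_bernoulli \<chi> (p ^ m) i"]
        p_bounded_mult[OF p_bounded_if_p_integral[OF p_integral_of_nat[of "fact K"]] gen_bernoulli_p_bounded]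
  by (simp add: divide_divide_eq_left)

lemma p_power_clears_power_sum_coeffs:
  assumes "K > 0"
  obtains e where "\<And>t. t \<ge> e \<Longrightarrow> of_nat p ^ t * (1 / of_nat K) \<in> p_integral"
    "\<And>t i. t \<ge> e \<Longrightarrow> i < K \<Longrightarrow> of_nat p ^ t * (power_sum_coeff K i / of_nat K) \<in> p_integral"
proof -
  define X where "X = insert 1 (power_sum_coeff K ` {..<K})"
  have "x / of_nat K \<in> p_bounded" if "x \<in> X" for x
    using that assms power_sum_coeff_p_bounded p_bounded_of_int[of 1]
    unfolding X_def by (auto intro!: p_bounded_divide_nat)
  then have "\<forall>x\<in>X. \<forall>\<^sub>F t in sequentially. of_nat p ^ t * (x / of_nat K) \<in> p_integral"
    using eventually_p_power_mult_p_integral by blast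
  then have "\<forall>\<^sub>F t in sequentially. \<forall>x\<in>X. of_nat p ^ t * (x / of_nat K) \<in> p_integral"
    by (rule eventually_ball_finite[rotated]) (simp add: X_def)
  then obtain e where "\<And>t x. t \<ge> e \<Longrightarrow> x \<in> X \<Longrightarrow> of_nat p ^ t * (x / of_nat K) \<in> p_integral"
    unfolding eventually_sequentially by blast
  then show ?thesis
    using that[of e] unfolding X_def by blast
qed

lemma char_power_sum_bernoulli:
  assumes "R \<ge> m"
  shows "char_power_sum R K = of_nat (p ^ R) *
    (gen_bernoulli \<chi> (p ^ m) K + (\<Sum>i<K. power_sum_coeff K i * of_nat (p ^ R) ^ (K - i)))"
proof -
  define F where "F = p ^ R"
  define B where "B i = gen_bernoulli \<chi> (p ^ m) i" for i
  have "p ^ m * p ^ (R - m) = F" unfolding F_def using assms by (simp add: power_add[symmetric])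
  then have "char_power_sum R K / fact K
      = (\<Sum>i<K. B i / fact i * of_nat F ^ (Suc K - i) / fact (Suc K - i)) + B K / fact K * of_nat F"
    using gen_bernoulli_power_sum[OF dirichlet[folded of_nat_power], where r = "p ^ (R - m)" and K = K]
          char_power_sum_eq_sum_Icc[of R K] assms m_pos
    by (simp add: F_def B_def lessThan_Suc_atMost[symmetric])
  moreover have "fact K * (B i / fact i * of_nat F ^ (Suc K - i) / fact (Suc K - i))
      = of_nat F * (power_sum_coeff K i * of_nat F ^ (K - i))" if "i < K" for i
    using that by (simp add: power_sum_coeff_def B_def Suc_diff_le field_simps)
  ultimately show ?thesis
    unfolding F_def[symmetric] B_def[symmetric]
    by (simp add: field_simps sum_distrib_left)
qed

lemma char_power_sum_reflect:
  assumes "R \<ge> m"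
  shows "char_power_sum R K = \<chi> (-1) * (\<Sum>u<p ^ R. \<chi> (int u) * of_int ((- int u) mod int (p ^ R)) ^ K)"
proof -
  define F where "F = p ^ R"
  have F: "F > 0" unfolding F_def using p_pos by simp
  have "char_power_sum R K = (\<Sum>u<F. (\<lambda>t. \<chi> (int t) * of_nat t ^ K) (nat ((int u * (-1)) mod int F)))"
    unfolding char_power_sum_def F_def[symmetric] by (rule sum_mult_mod_reindex[OF F, symmetric]) simp
  also have "\<dots> = (\<Sum>u<F. \<chi> (-1) * (\<chi> (int u) * of_int ((- int u) mod int F) ^ K))"
  proof (rule sum.cong)
    fix u
    have "\<chi> ((- int u) mod int F) = \<chi> (-1) * \<chi> (int u)"
      using chi_mod_p_power[OF assms, of "- int u"] chi_mult[of "-1" "int u"] by (simp add: F_def)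
    then show "\<chi> (int (nat ((int u * (-1)) mod int F))) * of_nat (nat ((int u * (-1)) mod int F)) ^ K
        = \<chi> (-1) * (\<chi> (int u) * of_int ((- int u) mod int F) ^ K)"
      using F by (simp add: of_nat_nat)
  qed simp
  finally show ?thesis unfolding F_def by (simp add: sum_distrib_left)
qed

text \<open>For the units \<open>u\<close> one has \<open>(-u) mod p\<^sup>R = p\<^sup>R - u\<close>, and \<open>(p\<^sup>R - u)\<^sup>k\<^sup>+\<^sup>1\<close> is expanded to
  second order in \<open>p\<^sup>R\<close>.\<close>

lemma char_power_sum_reflect_expansion:
  assumes R: "R \<ge> m"
  obtains W where "W \<in> p_integral"
    "char_power_sum R (Suc k) = \<chi> (-1) * ((-1) ^ Suc k * char_power_sum R (Suc k)
       + of_nat (Suc k) * of_nat (p ^ R) * (-1) ^ k * char_power_sum R k + of_nat (p ^ R) ^ 2 * W)"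
proof -
  define F where "F = p ^ R"
  obtain w where w: "\<And>u. 0 < u \<Longrightarrow> u < F \<Longrightarrow>
    (of_int ((- int u) mod int F) :: complex) ^ Suc k = (-1) ^ Suc k * of_nat u ^ Suc k
      + of_nat (Suc k) * of_nat F * (-1) ^ k * of_nat u ^ k + of_nat F ^ 2 * of_int (w u)"
    using neg_mod_power_Suc_expansion by blast
  define W where "W = (\<Sum>u<F. \<chi> (int u) * of_int (w u))"
  have summand: "\<chi> (int u) * of_int ((- int u) mod int F) ^ Suc k
     = (-1) ^ Suc k * (\<chi> (int u) * of_nat u ^ Suc k)
       + of_nat (Suc k) * of_nat F * (-1) ^ k * (\<chi> (int u) * of_nat u ^ k)
       + of_nat F ^ 2 * (\<chi> (int u) * of_int (w u))" if u: "u < F" for u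
  proof (cases "\<chi> (int u) = 0")
    case False
    then have "0 < u" by (metis chi_eq_0_if_dvd dvd_0_right of_nat_0 gr0I)
    show ?thesis unfolding w[OF \<open>0 < u\<close> u] by (simp only: distrib_left mult_ac)
  qed simp
  have "char_power_sum R (Suc k) = \<chi> (-1) * (\<Sum>u<F. \<chi> (int u) * of_int ((- int u) mod int F) ^ Suc k)"
    unfolding F_def by (rule char_power_sum_reflect[OF R])
  also have "(\<Sum>u<F. \<chi> (int u) * of_int ((- int u) mod int F) ^ Suc k)
      = (\<Sum>u<F. (-1) ^ Suc k * (\<chi> (int u) * of_nat u ^ Suc k)
          + of_nat (Suc k) * of_nat F * (-1) ^ k * (\<chi> (int u) * of_nat u ^ k)
          + of_nat F ^ 2 * (\<chi> (int u) * of_int (w u)))"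
    by (rule sum.cong) (simp_all only: summand lessThan_iff)
  also have "\<dots> = (-1) ^ Suc k * char_power_sum R (Suc k)
      + of_nat (Suc k) * of_nat F * (-1) ^ k * char_power_sum R k + of_nat F ^ 2 * W"
    unfolding char_power_sum_def W_def F_def by (simp only: sum.distrib sum_distrib_left)
  finally have "char_power_sum R (Suc k) = \<chi> (-1) * ((-1) ^ Suc k * char_power_sum R (Suc k)
       + of_nat (Suc k) * of_nat F * (-1) ^ k * char_power_sum R k + of_nat F ^ 2 * W)" .
  moreover have "W \<in> p_integral"
    unfolding W_def by (intro p_integral_intros chi_p_integral)
  ultimately show ?thesis using that unfolding F_def by blast
qed

lemma char_power_sum_0_eq_0:
  assumes R: "R \<ge> m" and b: "\<not> int p dvd b" "\<chi> b \<noteq> 1"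
  shows "char_power_sum R 0 = 0"
proof -
  define F where "F = p ^ R"
  have F: "F > 0" unfolding F_def using p_pos by simp
  have cop: "coprime b (int F)"
    unfolding F_def by (rule coprime_p_power_if_not_dvd[OF b(1)])
  have "\<chi> b * char_power_sum R 0 = (\<Sum>u<F. (\<lambda>t. \<chi> (int t)) (nat ((int u * b) mod int F)))"
    unfolding char_power_sum_def F_def[symmetric] sum_distrib_left
    using F chi_mod_p_power[OF R, of "int _ * b"] by (intro sum.cong) (simp_all add: F_def chi_mult mult.commute)
  also have "\<dots> = char_power_sum R 0"
    unfolding char_power_sum_def F_def[symmetric]
    using sum_mult_mod_reindex[OF F cop, of "\<lambda>t. \<chi> (int t)"] by simp
  finally show ?thesis using b(2) by (simp add: algebra_simps)
qed

lemma char_power_sum_0_half: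
  assumes R: "R \<ge> m" "R \<ge> 2" and p2: "p = 2"
  shows "char_power_sum R 0 / 2 \<in> p_integral"
proof (cases "\<exists>b. odd b \<and> \<chi> b \<noteq> 1")
  case True
  then obtain b where "odd b" "\<chi> b \<noteq> 1" by blast
  moreover from \<open>odd b\<close> have "\<not> int p dvd b" using p2 by simp
  ultimately have "char_power_sum R 0 = 0" using char_power_sum_0_eq_0[OF R(1)] by blast
  then show ?thesis by (simp add: p_integral_0)
next
  case False
  have chi: "\<chi> (int u) = (if odd u then 1 else 0)" for u
  proof (cases "odd u")
    case True
    then have "odd (int u)" by simp
    with False have "\<chi> (int u) = 1" by blast
    with True show ?thesis by simp
  next
    case False
    then have "int p dvd int u" using p2 by simp
    with False show ?thesis using chi_eq_0_if_dvd by simp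
  qed
  have "R = Suc (Suc (R - 2))" using R(2) by simp
  then have pR: "p ^ R = 2 * (2 * 2 ^ (R - 2))"
    using p2 by (metis power_Suc)
  have "char_power_sum R 0 = (\<Sum>u<p ^ R. if odd u then 1 else 0)"
    unfolding char_power_sum_def by (simp only: chi power_0 mult_1_right)
  also have "\<dots> = 2 * of_nat (2 ^ (R - 2))"
    unfolding pR by (simp only: sum_lessThan_double_odd of_nat_mult of_nat_numeral)
  finally have "char_power_sum R 0 / 2 = of_nat (2 ^ (R - 2))"
    by simp
  then show ?thesis
    by (simp only: p_integral_of_nat)
qed

lemma char_power_sum_half:
  assumes R: "R \<ge> m" "R \<ge> 2" and p2: "p = 2"
  shows "char_power_sum R j / 2 \<in> p_integral"
proof -
  define E where "E = (\<Sum>u<p ^ R. \<chi> (int u) * of_int ((int u ^ j - 1) div 2))"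
  have "\<chi> (int u) * of_nat u ^ j = \<chi> (int u) + 2 * (\<chi> (int u) * of_int ((int u ^ j - 1) div 2))" for u
  proof (cases "odd u")
    case True
    then have "2 * ((int u ^ j - 1) div 2) = int u ^ j - 1" by simp
    then have "int u ^ j = 1 + 2 * ((int u ^ j - 1) div 2)" by simp
    then have "(of_int (int u ^ j) :: complex) = of_int (1 + 2 * ((int u ^ j - 1) div 2))"
      by (rule arg_cong)
    then have "(of_nat u ^ j :: complex) = 1 + 2 * of_int ((int u ^ j - 1) div 2)"
      by simp
    then show ?thesis by (simp add: algebra_simps)
  qed (use p2 chi_eq_0_if_dvd in simp)
  then have "char_power_sum R j = char_power_sum R 0 + 2 * E"
    unfolding char_power_sum_def E_def by (simp add: sum.distrib sum_distrib_left)
  moreover have "E \<in> p_integral"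
    unfolding E_def by (intro p_integral_intros chi_p_integral)
  ultimately show ?thesis
    using char_power_sum_0_half[OF R p2] by (simp add: add_divide_distrib p_integral_add)
qed

lemma of_nat_Suc_times_char_power_sum_half:
  assumes "R \<ge> m" "p \<noteq> 2 \<or> R \<ge> 2"
  shows "of_nat (Suc j) * char_power_sum R j / 2 \<in> p_integral"
proof (cases "p = 2")
  case True
  show ?thesis
  proof (cases "even (Suc j)")
    case True
    then obtain i where "Suc j = 2 * i" by blast
    then have "of_nat (Suc j) * char_power_sum R j / 2 = of_nat i * char_power_sum R j" by simp
    also have "\<dots> \<in> p_integral" by (intro p_integral_intros char_power_sum_p_integral)
    finally show ?thesis .
  next
    case False
    have "R \<ge> 2" using assms(2) \<open>p = 2\<close> by simp
    then have "of_nat (Suc j) * (char_power_sum R j / 2) \<in> p_integral"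
      using char_power_sum_half[OF assms(1) _ \<open>p = 2\<close>] by (intro p_integral_mult p_integral_of_nat)
    then show ?thesis by simp
  qed
next
  case False
  then show ?thesis by (intro p_integral_half p_integral_intros char_power_sum_p_integral)
qed

text \<open>This is where the parity condition enters: reflecting \<open>u \<mapsto> -u\<close> multiplies \<open>S\<^sub>R(k)\<close> by
  \<open>\<chi>(-1)(-1)\<^sup>k = -1\<close> up to terms divisible by \<open>p\<^sup>R\<close>.\<close>

lemma char_power_sum_congp_0:
  assumes R: "R \<ge> m" and p: "p \<noteq> 2 \<or> R \<ge> 2" and parity: "\<chi> (-1) \<noteq> (-1) ^ k"
  shows "congp R (char_power_sum R k) 0"
proof (cases k)
  case 0
  then have "char_power_sum R k = \<chi> (-1) * char_power_sum R k"
    using char_power_sum_reflect[OF R, of 0] by (simp add: char_power_sum_def)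
  then show ?thesis
    using chi_minus_one_opposite_parity[OF parity] 0 by (simp add: congp_refl)
next
  case (Suc j)
  define F where "F = p ^ R"
  obtain W where W: "W \<in> p_integral"
    and eq: "char_power_sum R k = \<chi> (-1) * ((-1) ^ k * char_power_sum R k
       + of_nat k * of_nat F * (-1) ^ j * char_power_sum R j + of_nat F ^ 2 * W)"
    using char_power_sum_reflect_expansion[OF R, of j] unfolding Suc F_def by blast
  have F: "(of_nat F :: complex) \<noteq> 0" unfolding F_def using p_pos by simp
  have "\<chi> (-1) * ((-1) ^ k * char_power_sum R k) = - char_power_sum R k"
    using chi_minus_one_opposite_parity[OF parity] by (simp add: mult.assoc[symmetric])
  with eq have "char_power_sum R k
      = - char_power_sum R k + \<chi> (-1) * (of_nat k * of_nat F * (-1) ^ j * char_power_sum R j + of_nat F ^ 2 * W)"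
    by (simp only: distrib_left[of "\<chi> (-1)"] add.assoc)
  then have "2 * char_power_sum R k
      = \<chi> (-1) * (of_nat k * of_nat F * (-1) ^ j * char_power_sum R j + of_nat F ^ 2 * W)"
    by (simp add: eq_neg_iff_add_eq_0 algebra_simps)
  then have eqS: "char_power_sum R k / of_nat F
      = \<chi> (-1) * ((-1) ^ j * (of_nat k * char_power_sum R j / 2) + of_nat F / 2 * W)"
    using F by (simp add: field_simps power2_eq_square)
  have "of_nat F / 2 \<in> p_integral"
    unfolding F_def using R m_pos by (intro p_power_half_p_integral) simp
  moreover have "(-1) ^ j \<in> p_integral"
    using p_integral_of_int[of "(-1) ^ j"] by simp
  moreover have "of_nat k * char_power_sum R j / 2 \<in> p_integral"
    using of_nat_Suc_times_char_power_sum_half[OF R p, of j] Suc by simp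
  ultimately have "char_power_sum R k / of_nat F \<in> p_integral"
    unfolding eqS by (intro p_integral_mult p_integral_add chi_p_integral W)
  then show ?thesis
    unfolding congp_def F_def by simp
qed

lemma char_power_sum_twist:
  assumes R: "R \<ge> m" and a: "\<not> int p dvd a"
  shows "char_power_sum R K
    = (\<Sum>j<p ^ R. \<chi> ((int j * a) mod int (p ^ R)) * of_int ((int j * a) mod int (p ^ R)) ^ K)"
proof -
  define F where "F = p ^ R"
  have F: "F > 0" unfolding F_def using p_pos by simp
  have "coprime a (int F)"
    unfolding F_def by (rule coprime_p_power_if_not_dvd[OF a])
  from sum_mult_mod_reindex[OF F this, of "\<lambda>t. \<chi> (int t) * of_nat t ^ K"] F show ?thesis
    unfolding char_power_sum_def F_def[symmetric] by simp
qed

lemma twisted_floor_sum_congp: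
  assumes R: "R \<ge> m"
  shows "congp R (\<Sum>j<p ^ R. \<chi> ((int j * a) mod int (p ^ R)) * of_int ((int j * a) div int (p ^ R))
      * of_int ((int j * a) mod int (p ^ R)) ^ k) (\<chi> a * of_int a ^ k * char_floor_sum R a k)"
proof -
  define F where "F = p ^ R"
  define r where "r j = (int j * a) mod int F" for j
  define q where "q j = (int j * a) div int F" for j
  have chi_r: "\<chi> (r j) = \<chi> (int j * a)" for j
    unfolding r_def F_def using chi_mod_p_power[OF R] by (simp add: of_nat_power)
  have "congp R (\<chi> (r j) * of_int (q j) * of_int (r j) ^ k)
      (\<chi> (r j) * of_int (q j) * of_int (int j * a) ^ k)" for j
    unfolding r_def F_def
    by (intro congp_mult_left p_integral_mult chi_p_integral p_integral_of_int congp_of_int_power)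
       (simp add: mod_eq_dvd_iff[symmetric])
  then have "congp R (\<Sum>j<F. \<chi> (r j) * of_int (q j) * of_int (r j) ^ k)
      (\<Sum>j<F. \<chi> (r j) * of_int (q j) * of_int (int j * a) ^ k)"
    by (rule congp_sum)
  also have "(\<Sum>j<F. \<chi> (r j) * of_int (q j) * of_int (int j * a) ^ k) = \<chi> a * of_int a ^ k * char_floor_sum R a k"
    unfolding char_floor_sum_def F_def[symmetric] sum_distrib_left
    by (intro sum.cong) (simp_all add: chi_r chi_mult power_mult_distrib q_def mult_ac)
  finally show ?thesis unfolding r_def q_def F_def .
qed

lemma twisted_char_power_sum_expansion:
  assumes R: "R \<ge> m" and a: "\<not> int p dvd a"
  obtains U W where "W \<in> p_integral"
    "(\<chi> a * of_int a ^ Suc k - 1) * char_power_sum R (Suc k)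
       = of_nat (Suc k) * of_nat (p ^ R) * U + of_nat (p ^ R) ^ 2 * W"
    "congp R U (\<chi> a * of_int a ^ k * char_floor_sum R a k)"
proof -
  define F where "F = p ^ R"
  define r where "r j = (int j * a) mod int F" for j
  define q where "q j = (int j * a) div int F" for j
  have rq: "int j * a = r j + int F * q j" for j
    unfolding r_def q_def by simp
  have chi_r: "\<chi> (r j) = \<chi> (int j * a)" for j
    unfolding r_def F_def using chi_mod_p_power[OF R] by (simp add: of_nat_power)
  have "\<forall>j. \<exists>w. (r j + int F * q j) ^ Suc k = r j ^ Suc k + int (Suc k) * (int F * q j) * r j ^ k + (int F * q j)\<^sup>2 * w"
    using power_Suc_add_second_order by blast
  then obtain w where w: "\<And>j. (r j + int F * q j) ^ Suc k
      = r j ^ Suc k + int (Suc k) * (int F * q j) * r j ^ k + (int F * q j)\<^sup>2 * w j"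
    by metis
  define U where "U = (\<Sum>j<F. \<chi> (r j) * of_int (q j) * of_int (r j) ^ k)"
  define W where "W = (\<Sum>j<F. \<chi> (r j) * of_int (q j ^ 2 * w j))"
  have "\<chi> a * of_int a ^ Suc k * char_power_sum R (Suc k) = (\<Sum>j<F. \<chi> (r j) * of_int (r j + int F * q j) ^ Suc k)"
    unfolding char_power_sum_def F_def[symmetric] sum_distrib_left
    by (intro sum.cong) (simp_all add: chi_r chi_mult rq[symmetric] power_mult_distrib mult_ac)
  moreover have "char_power_sum R (Suc k) = (\<Sum>j<F. \<chi> (r j) * of_int (r j) ^ Suc k)"
    unfolding char_power_sum_twist[OF R a] r_def F_def ..
  ultimately have "(\<chi> a * of_int a ^ Suc k - 1) * char_power_sum R (Suc k)
      = (\<Sum>j<F. \<chi> (r j) * (of_int ((r j + int F * q j) ^ Suc k - r j ^ Suc k)))"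
    by (simp add: left_diff_distrib sum_subtractf right_diff_distrib)
  also have "\<dots> = of_nat (Suc k) * of_nat F * U + of_nat F ^ 2 * W"
    unfolding U_def W_def w by (simp add: sum.distrib sum_distrib_left algebra_simps power2_eq_square)
  finally have expansion: "(\<chi> a * of_int a ^ Suc k - 1) * char_power_sum R (Suc k)
      = of_nat (Suc k) * of_nat F * U + of_nat F ^ 2 * W" .
  have "congp R U (\<chi> a * of_int a ^ k * char_floor_sum R a k)"
    unfolding U_def r_def q_def F_def by (rule twisted_floor_sum_congp[OF R])
  moreover have "W \<in> p_integral"
    unfolding W_def by (intro p_integral_intros chi_p_integral)
  ultimately show ?thesis using that expansion unfolding F_def by blast
qed

lemma twisted_char_power_sum_bernoulli:
  assumes R: "R \<ge> m" and a: "\<not> int p dvd a"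
  obtains U W where "W \<in> p_integral"
    "(\<chi> a * of_int a ^ Suc k - 1) * (gen_bernoulli \<chi> (p ^ m) (Suc k)
        + (\<Sum>i<Suc k. power_sum_coeff (Suc k) i * of_nat (p ^ R) ^ (Suc k - i)))
      = of_nat (Suc k) * U + of_nat (p ^ R) * W"
    "congp R U (\<chi> a * of_int a ^ k * char_floor_sum R a k)"
proof -
  define F where "F = p ^ R"
  obtain U W where W: "W \<in> p_integral"
    and expansion: "(\<chi> a * of_int a ^ Suc k - 1) * char_power_sum R (Suc k)
      = of_nat (Suc k) * of_nat F * U + of_nat F ^ 2 * W"
    and U: "congp R U (\<chi> a * of_int a ^ k * char_floor_sum R a k)"
    using twisted_char_power_sum_expansion[OF R a] unfolding F_def by metis
  have eq: "of_nat F * ((\<chi> a * of_int a ^ Suc k - 1) * (gen_bernoulli \<chi> (p ^ m) (Suc k)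
        + (\<Sum>i<Suc k. power_sum_coeff (Suc k) i * of_nat F ^ (Suc k - i))))
      = of_nat F * (of_nat (Suc k) * U + of_nat F * W)"
    using expansion char_power_sum_bernoulli[OF R, of "Suc k"]
    unfolding F_def by (simp add: algebra_simps power2_eq_square)
  have F0: "(of_nat F :: complex) \<noteq> 0"
    unfolding F_def using p_pos by simp
  from eq have "(\<chi> a * of_int a ^ Suc k - 1) * (gen_bernoulli \<chi> (p ^ m) (Suc k)
        + (\<Sum>i<Suc k. power_sum_coeff (Suc k) i * of_nat F ^ (Suc k - i)))
      = of_nat (Suc k) * U + of_nat F * W"
    by (simp only: mult_left_cancel[OF F0])
  then show ?thesis
    using that[OF W _ U] unfolding F_def by blast
qed

text \<open>Splitting \<open>j < p\<^sup>R\<^sup>+\<^sup>1\<close> as \<open>j = u + p\<^sup>R v\<close> and summing \<open>\<lfloor>j a / p\<^sup>R\<^sup>+\<^sup>1\<rfloor>\<close> over \<open>v\<close> by Hermite's identity.\<close>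

lemma char_floor_sum_Suc_congp_power_sum:
  assumes R: "R \<ge> m" and a: "\<not> int p dvd a"
  shows "congp R (char_floor_sum (Suc R) a k)
    (char_floor_sum R a k + of_int (\<Sum>v<p. (int v * a) div int p) * char_power_sum R k)"
proof -
  define M where "M = p ^ R"
  have M: "M > 0" unfolding M_def using p_pos by simp
  define d where "d u v = ((int u + int M * int v) * a) div (int p * int M)" for u v :: nat
  define h where "h j = \<chi> (int j) * of_nat j ^ k * of_int ((int j * a) div int (p ^ Suc R))" for j
  have "char_floor_sum (Suc R) a k = (\<Sum>v<p. \<Sum>u<M. h (u + M * v))"
    unfolding char_floor_sum_def h_def[symmetric] sum_lessThan_mult_blocks[symmetric]
    by (simp add: M_def mult.commute)
  moreover have "congp R (h (u + M * v)) (\<chi> (int u) * of_nat u ^ k * of_int (d u v))" for u v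
  proof -
    have "\<chi> (int (u + M * v)) = \<chi> (int u)"
      using chi_periodic_p_power[OF order_refl, of "int u" "int v"] chi_periodic_p_power[OF R]
      by (simp add: M_def mult.commute)
    moreover have "(int (u + M * v) * a) div int (p ^ Suc R) = d u v"
      unfolding d_def M_def by (simp add: mult_ac)
    moreover have "congp R (of_int (int (u + M * v)) ^ k) (of_int (int u) ^ k)"
      by (rule congp_of_int_power) (simp add: M_def)
    then have "congp R (\<chi> (int u) * of_int (d u v) * of_int (int (u + M * v)) ^ k)
        (\<chi> (int u) * of_int (d u v) * of_int (int u) ^ k)"
      by (intro congp_mult_left p_integral_mult chi_p_integral p_integral_of_int)
    ultimately show ?thesis
      unfolding h_def by (simp add: mult_ac)
  qed
  ultimately have "congp R (char_floor_sum (Suc R) a k)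
      (\<Sum>u<M. \<chi> (int u) * of_nat u ^ k * of_int (\<Sum>v<p. d u v))"
    by (simp add: congp_sum sum.swap[of _ "{..<p}"] sum_distrib_left)
  also have "(\<Sum>u<M. \<chi> (int u) * of_nat u ^ k * of_int (\<Sum>v<p. d u v))
      = char_floor_sum R a k + of_int (\<Sum>v<p. (int v * a) div int p) * char_power_sum R k"
  proof -
    have "(\<Sum>v<p. d u v) = int u * a div int M + (\<Sum>v<p. (int v * a) div int p)" for u
      unfolding d_def using sum_div_lift[OF M p_pos, of a "int u"] coprime_p_power_if_not_dvd[OF a, of 1]
      by simp
    then show ?thesis
      unfolding char_floor_sum_def char_power_sum_def M_def
      by (simp add: sum.distrib sum_distrib_left algebra_simps)
  qed
  finally show ?thesis .
qed

lemma char_floor_sum_Suc_congp: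
  assumes "R \<ge> m" "p \<noteq> 2 \<or> R \<ge> 2" "\<chi> (-1) \<noteq> (-1) ^ k" "\<not> int p dvd a"
  shows "congp R (char_floor_sum (Suc R) a k) (char_floor_sum R a k)"
proof -
  have "congp R (of_int (\<Sum>v<p. (int v * a) div int p) * char_power_sum R k) 0"
    using congp_mult_left[OF p_integral_of_int char_power_sum_congp_0[OF assms(1-3)]]
    by (simp only: mult_zero_right)
  from congp_trans[OF char_floor_sum_Suc_congp_power_sum[OF assms(1,4)] congp_add[OF congp_refl this]]
  show ?thesis by simp
qed

lemma char_floor_sum_congp:
  assumes "n \<ge> m" "p \<noteq> 2 \<or> n \<ge> 2" "\<chi> (-1) \<noteq> (-1) ^ k" "\<not> int p dvd a" "R \<ge> n"
  shows "congp n (char_floor_sum R a k) (char_floor_sum n a k)"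
  using assms(5)
proof (induction R rule: dec_induct)
  case (step R)
  then have "congp R (char_floor_sum (Suc R) a k) (char_floor_sum R a k)"
    using assms by (intro char_floor_sum_Suc_congp) auto
  then show ?case
    using step congp_mono congp_trans by blast
qed (rule congp_refl)

lemma power_sum_coeff_tail_p_integral:
  assumes e: "\<And>t i. t \<ge> e \<Longrightarrow> i < K \<Longrightarrow> of_nat p ^ t * (power_sum_coeff K i / of_nat K) \<in> p_integral"
    and R: "R \<ge> n + e"
  shows "(\<Sum>i<K. power_sum_coeff K i * of_nat (p ^ R) ^ (K - i)) / (of_nat K * of_nat p ^ n) \<in> p_integral"
  unfolding sum_divide_distrib
proof (rule p_integral_sum)
  fix i assume "i \<in> {..<K}"
  then have "R * 1 \<le> R * (K - i)" by (intro mult_le_mono2) simp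
  then have t: "R * (K - i) = (R * (K - i) - n) + n" "R * (K - i) - n \<ge> e"
    using R by linarith+
  have "(of_nat (p ^ R) :: complex) ^ (K - i) = of_nat p ^ (R * (K - i))"
    by (simp add: power_mult)
  also have "\<dots> = of_nat p ^ (R * (K - i) - n) * of_nat p ^ n"
    by (simp only: power_add[symmetric] t(1)[symmetric])
  finally have "power_sum_coeff K i * of_nat (p ^ R) ^ (K - i) / (of_nat K * of_nat p ^ n)
      = of_nat p ^ (R * (K - i) - n) * (power_sum_coeff K i / of_nat K)"
    using p_pos by simp
  also have "\<dots> \<in> p_integral"
    using e t(2) \<open>i \<in> {..<K}\<close> by simp
  finally show "power_sum_coeff K i * of_nat (p ^ R) ^ (K - i) / (of_nat K * of_nat p ^ n) \<in> p_integral" .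
qed

lemma L_neg_congp_char_floor_sum:
  assumes a: "\<not> int p dvd a"
  obtains R where "R \<ge> n"
    "congp n ((1 - \<chi> a * of_int a ^ (k + 1)) * L_neg \<chi> (p ^ m) k) (\<chi> a * of_int a ^ k * char_floor_sum R a k)"
proof -
  define K where "K = Suc k"
  define B where "B = gen_bernoulli \<chi> (p ^ m) K"
  define c where "c = \<chi> a * of_int a ^ K - 1"
  have K: "(of_nat K :: complex) \<noteq> 0" unfolding K_def of_nat_eq_0_iff by simp
  obtain e where e1: "\<And>t. t \<ge> e \<Longrightarrow> of_nat p ^ t * (1 / of_nat K) \<in> p_integral"
    and e2: "\<And>t i. t \<ge> e \<Longrightarrow> i < K \<Longrightarrow> of_nat p ^ t * (power_sum_coeff K i / of_nat K) \<in> p_integral"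
    using p_power_clears_power_sum_coeffs[of K] unfolding K_def by blast
  define R where "R = m + n + e"
  define Y where "Y = (\<Sum>i<K. power_sum_coeff K i * of_nat (p ^ R) ^ (K - i))"
  have R: "R \<ge> m" "R \<ge> n" "R \<ge> n + e" unfolding R_def by simp_all
  obtain U W where W: "W \<in> p_integral" and cBY: "c * (B + Y) = of_nat K * U + of_nat (p ^ R) * W"
    and U: "congp R U (\<chi> a * of_int a ^ k * char_floor_sum R a k)"
    using twisted_char_power_sum_bernoulli[OF R(1) a] unfolding K_def B_def c_def Y_def by blast
  have "c * B - of_nat K * U = (c * (B + Y) - c * Y) - of_nat K * U"
    by (simp add: distrib_left)
  also have "\<dots> = of_nat (p ^ R) * W - c * Y"
    unfolding cBY by simp
  finally have cB: "c * B - of_nat K * U = of_nat (p ^ R) * W - c * Y" .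
  have "(1 - \<chi> a * of_int a ^ (k + 1)) * L_neg \<chi> (p ^ m) k = c * B / of_nat K"
    unfolding L_neg_def c_def B_def K_def by (simp add: right_diff_distrib left_diff_distrib diff_divide_distrib)
  also have "\<dots> = U + (c * B - of_nat K * U) / of_nat K"
    using K by (simp add: diff_divide_distrib)
  finally have "((1 - \<chi> a * of_int a ^ (k + 1)) * L_neg \<chi> (p ^ m) k - U) / of_nat p ^ n
      = (of_nat p ^ (R - n) * of_nat p ^ n * W - c * Y) / of_nat K / of_nat p ^ n"
    unfolding cB using R(2) by (simp add: power_add[symmetric])
  also have "\<dots> = of_nat p ^ (R - n) * (1 / of_nat K) * W - c * (Y / (of_nat K * of_nat p ^ n))"
    using K p_pos by (simp add: field_simps)
  also have "\<dots> \<in> p_integral"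
  proof (rule p_integral_diff[OF p_integral_mult[OF e1 W] p_integral_mult])
    show "c \<in> p_integral"
      unfolding c_def by (intro p_integral_intros chi_p_integral)
    show "Y / (of_nat K * of_nat p ^ n) \<in> p_integral"
      unfolding Y_def using e2 R(3) by (rule power_sum_coeff_tail_p_integral)
  qed (use R(3) in simp)
  finally have "congp n ((1 - \<chi> a * of_int a ^ (k + 1)) * L_neg \<chi> (p ^ m) k) U"
    unfolding congp_def .
  with congp_mono[OF U R(2)] show ?thesis
    using that R(2) congp_trans by blast
qed

lemma char_floor_sum_eq_floor_sum:
  "char_floor_sum n a k = (\<Sum>j=1..p ^ n - 1. \<chi> (int j) * of_nat j ^ k *
      of_int \<lfloor>real_of_int (int j * a) / real (p ^ n)\<rfloor>)"
proof -
  have "{..<p ^ n} = insert 0 {1..p ^ n - 1}"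
    using p_pos by auto
  moreover have "\<lfloor>real_of_int (int j * a) / real (p ^ n)\<rfloor> = (int j * a) div int (p ^ n)" for j
    using floor_divide_of_int_eq[of "int j * a" "int (p ^ n)"] by simp
  ultimately show ?thesis
    unfolding char_floor_sum_def by (simp add: chi_eq_0_if_dvd)
qed

end

theorem theorem3p1:
  fixes p m n k :: nat and a :: int and \<chi> :: "int \<Rightarrow> complex"
  assumes "prime p" and "\<not> int p dvd a" and "m \<ge> 1"
    and "dirichlet_char (int p ^ m) \<chi>"
    and "n \<ge> m" and "\<chi> (-1) \<noteq> (-1) ^ k"
    and "p \<ge> 5 \<or> (p \<in> {2, 3} \<and> n \<ge> 2)"
  shows "cong_ppow p n
    ((1 - \<chi> a * of_int a ^ (k + 1)) * L_neg \<chi> (p ^ m) k)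
    (\<chi> a * of_int a ^ k *
      (\<Sum>j=1..p ^ n - 1. \<chi> (int j) * of_nat j ^ k *
          of_int \<lfloor>real_of_int (int j * a) / real (p ^ n)\<rfloor>))"
proof -
  define q where "q = totient (nat (int p ^ m))"
  obtain \<zeta> where \<zeta>: "\<zeta> ^ q = 1" "\<And>x. \<exists>s. \<chi> x = 0 \<or> \<chi> x = \<zeta> ^ s"
    using dirichlet_char_values_roots_of_unity[OF assms(4)] unfolding q_def by blast
  interpret p_cyclotomic p \<zeta> q
    using assms(1) \<zeta>(1) prime_gt_0_nat[OF assms(1)] unfolding q_def by unfold_locales simp_all
  have "\<chi> x \<in> Z_zeta" for x
    using \<zeta>(2)[of x] Z_zeta_root_power Z_zeta_of_int[of 0] by auto
  interpret p_power_character p \<zeta> q m \<chi>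
    using assms(3,4) \<open>\<And>x. \<chi> x \<in> Z_zeta\<close> by unfold_locales
  obtain R where "R \<ge> n"
    and "congp n ((1 - \<chi> a * of_int a ^ (k + 1)) * L_neg \<chi> (p ^ m) k) (\<chi> a * of_int a ^ k * char_floor_sum R a k)"
    using L_neg_congp_char_floor_sum[OF assms(2)] .
  moreover have "p \<noteq> 2 \<or> n \<ge> 2" using assms(7) by auto
  then have "congp n (\<chi> a * of_int a ^ k * char_floor_sum R a k) (\<chi> a * of_int a ^ k * char_floor_sum n a k)"
    using assms \<open>R \<ge> n\<close>
    by (intro congp_mult_left p_integral_mult p_integral_power p_integral_of_int chi_p_integral char_floor_sum_congp)
  ultimately show ?thesis
    unfolding char_floor_sum_eq_floor_sum by (blast intro: cong_ppow_if_congp congp_trans)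
qed

end
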